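(* For every $m\in\mathbb{N}$ the set $$X_m:=\left\{\sum_{i=1}^m\frac{d_i}{2^{i}}:\ d_{i}\in\{0\}\cup \{t_{k,n}:k\ge0,n\ge1\}\right\}$$ is nowhere dense in $\mathbb{R}$.
   Context: For $k\ge 0$ and $n\ge 1$, $t_{k,n}:=\frac{1}{2^k n}$. *)

theory Defs
  imports "HOL-Analysis.Analysis"
begin

definition t :: "nat \<Rightarrow> nat \<Rightarrow> real" where
  "t k n = 1 / (2 ^ k * real n)"

definition digits :: "real set" where
  "digits = {0} \<union> {t k n | k n. n \<ge> 1}"

definition X :: "nat \<Rightarrow> real set" where
  "X m = {(\<Sum>i=1..m. d i / 2 ^ i) | d. \<forall>i\<in>{1..m}. d i \<in> digits}"

definition nowhere_dense :: "'a::topological_space set \<Rightarrow> bool" where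
  "nowhere_dense S \<longleftrightarrow> interior (closure S) = {}"

end

theory Submission
  imports Defs
begin

text \<open>Since 2^k n ranges over all positive integers, the digit set is {0} together with the
  sequence 1/N, N \<ge> 1, which converges to 0; so it is compact and countable.  Each X (m+1) is the
  image of X m \<times> digits under the continuous map (x, d) \<mapsto> x + d / 2^(m+1), hence by induction
  every X m is compact and countable.  A closed countable subset of \<real> equals its closure and
  contains no interval, as intervals are uncountable, so it is nowhere dense.\<close>

lemma empty_interior_countable:
  fixes S :: "'a::euclidean_space set"
  assumes "countable S"
  shows "interior S = {}"
proof (rule ccontr)
  assume "interior S \<noteq> {}"
  then obtain x e where "e > 0" "ball x e \<subseteq> S"
    by (meson mem_interior ex_in_conv)
  then show False
    using assms countable_subset uncountable_ball by blast
qed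

lemma nowhere_dense_closed_countable:
  fixes S :: "'a::euclidean_space set"
  assumes "closed S" "countable S"
  shows "nowhere_dense S"
  using assms by (simp add: nowhere_dense_def empty_interior_countable)

lemma digits_eq_inverse_Suc: "digits = insert 0 (range (\<lambda>n. inverse (real (Suc n))))"
proof -
  have "t k n \<in> range (\<lambda>n. inverse (real (Suc n)))" if "n \<ge> 1" for k n
  proof
    from that have "2 ^ k * n \<ge> (1::nat)" by simp
    then show "t k n = inverse (real (Suc (2 ^ k * n - 1)))"
      by (simp add: t_def of_nat_diff divide_inverse)
  qed simp
  moreover have "inverse (real (Suc n)) = t 0 (Suc n)" for n
    by (simp add: t_def inverse_eq_divide)
  ultimately have "{t k n | k n. n \<ge> 1} = range (\<lambda>n. inverse (real (Suc n)))"
    by fastforce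
  then show ?thesis
    unfolding digits_def by auto
qed

lemma compact_digits: "compact digits"
  unfolding digits_eq_inverse_Suc
  by (rule compact_sequence_with_limit[OF LIMSEQ_inverse_real_of_nat])

lemma countable_digits: "countable digits"
  unfolding digits_eq_inverse_Suc by simp

lemma X_0: "X 0 = {0}"
  unfolding X_def by auto

lemma X_Suc: "X (Suc m) = (\<lambda>(x, d). x + d / 2 ^ Suc m) ` (X m \<times> digits)"
proof
  show "X (Suc m) \<subseteq> (\<lambda>(x, d). x + d / 2 ^ Suc m) ` (X m \<times> digits)"
  proof
    fix z assume "z \<in> X (Suc m)"
    then obtain d where z: "z = (\<Sum>i=1..Suc m. d i / 2 ^ i)"
      and d: "\<forall>i\<in>{1..Suc m}. d i \<in> digits"
      unfolding X_def by blast
    have "(\<Sum>i=1..m. d i / 2 ^ i) \<in> X m"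
      using d unfolding X_def by auto
    moreover have "z = (\<Sum>i=1..m. d i / 2 ^ i) + d (Suc m) / 2 ^ Suc m"
      using z by (simp add: sum.cl_ivl_Suc)
    ultimately show "z \<in> (\<lambda>(x, d). x + d / 2 ^ Suc m) ` (X m \<times> digits)"
      using d by force
  qed
  show "(\<lambda>(x, d). x + d / 2 ^ Suc m) ` (X m \<times> digits) \<subseteq> X (Suc m)"
  proof clarify
    fix x y assume x: "x \<in> X m" and y: "y \<in> digits"
    from x obtain d where x_eq: "x = (\<Sum>i=1..m. d i / 2 ^ i)"
      and d: "\<forall>i\<in>{1..m}. d i \<in> digits"
      unfolding X_def by blast
    define d' where "d' = d(Suc m := y)"
    have "(\<Sum>i=1..m. d' i / 2 ^ i) = x"
      unfolding x_eq d'_def by (intro sum.cong) auto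
    then have "x + y / 2 ^ Suc m = (\<Sum>i=1..Suc m. d' i / 2 ^ i)"
      by (simp add: sum.cl_ivl_Suc d'_def)
    moreover have "\<forall>i\<in>{1..Suc m}. d' i \<in> digits"
      using d y unfolding d'_def by (auto simp: le_Suc_eq)
    ultimately show "x + y / 2 ^ Suc m \<in> X (Suc m)"
      unfolding X_def by blast
  qed
qed

lemma compact_X: "compact (X m)"
proof (induction m)
  case 0
  then show ?case by (simp add: X_0)
next
  case (Suc m)
  have "continuous_on (X m \<times> digits) (\<lambda>(x, d). x + d / 2 ^ Suc m)"
    unfolding case_prod_unfold by (intro continuous_intros) auto
  moreover have "compact (X m \<times> digits)"
    using Suc compact_digits by (rule compact_Times)
  ultimately show ?case
    unfolding X_Suc by (rule compact_continuous_image)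
qed

lemma countable_X: "countable (X m)"
proof (induction m)
  case 0
  then show ?case by (simp add: X_0)
next
  case (Suc m)
  then show ?case
    unfolding X_Suc using countable_digits by (intro countable_image) simp
qed

theorem lemma2p2:
  fixes m :: nat
  shows "nowhere_dense (X m)"
  using compact_X countable_X
  by (intro nowhere_dense_closed_countable compact_imp_closed)

end
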